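(* Let $d\ge2$ be an integer, let $D_1,\dots,D_d$ be real constants, $D=\sum_iD_i$, and let $\lambda<\pi^2/d$. Let $L=(L_1,\dots,L_d)\in C^1([0,1];\mathbb{R}^d)$ be the unique solution of $$L_i'=-\Big(\sum_{k=1}^dL_k\Big)L_i-\lambda\ \text{ on }[0,1],\qquad\int_0^1L_i(r)\,dr=D_i\qquad(i=1,\dots,d).$$ If moreover $$(d-1)\lambda=\sum_{i=1}^dL_i(0)^2-\Big(\sum_{i=1}^dL_i(0)\Big)^2,$$ then $\lambda\in[-D^2/d,\pi^2/d)$. *)

theory Defs
  imports "HOL-Analysis.Analysis"
begin

end

theory Submission
  imports Defs
begin

text \<open>
  Put \<open>S = \<Sum>\<^sub>i L\<^sub>i\<close>. Summing the equations gives the Riccati equation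
  \<open>S' = -d\<lambda> - S\<^sup>2\<close>, and the integral conditions give \<open>\<integral>\<^sub>0\<^sup>1 S = D\<close>.
  When \<open>\<lambda> < 0\<close> write \<open>-d\<lambda> = c\<^sup>2\<close>: the constants \<open>\<plusminus>c\<close> solve the
  Riccati equation, so \<open>S - c\<close> and \<open>S + c\<close> never change sign. By Cauchy-Schwarz the
  condition on \<open>\<lambda>\<close> forces \<open>S(0)\<^sup>2 \<ge> c\<^sup>2\<close>, hence \<open>|S| \<ge> c\<close> on all of
  \<open>[0,1]\<close> with constant sign, and integrating gives \<open>D\<^sup>2 \<ge> c\<^sup>2 = -d\<lambda>\<close>.
\<close>

lemma riccati_shifted_solution:
  fixes S :: "real \<Rightarrow> real" and c s t r :: real
  assumes cont: "continuous_on {s..t} S"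
    and der: "\<forall>x\<in>{s..t}. (S has_real_derivative (c\<^sup>2 - (S x)\<^sup>2)) (at x within {s..t})"
    and r: "r \<in> {s..t}"
  shows "S r - c = (S s - c) * exp (- integral {s..r} (\<lambda>x. S x + c))"
proof -
  define F where "F = (\<lambda>y. integral {s..y} (\<lambda>x. S x + c))"
  have contc: "continuous_on {s..t} (\<lambda>x. S x + c)"
    using cont by (intro continuous_intros)
  txt \<open>\<open>S' = -(S - c)(S + c)\<close>, so \<open>exp F\<close> is an integrating factor for \<open>S - c\<close>.\<close>
  have "((\<lambda>y. (S y - c) * exp (F y)) has_real_derivative 0) (at x within {s..t})"
    if x: "x \<in> {s..t}" for x
  proof -
    have dF: "(F has_real_derivative (S x + c)) (at x within {s..t})"
      unfolding F_def by (rule integral_has_real_derivative[OF contc x])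
    have dS: "(S has_real_derivative (c\<^sup>2 - (S x)\<^sup>2)) (at x within {s..t})"
      using der x by blast
    show ?thesis
      using DERIV_mult'[OF DERIV_diff[OF dS DERIV_const[of c]] DERIV_exp[THEN DERIV_chain2, OF dF]]
      by (rule DERIV_cong) (simp add: algebra_simps power2_eq_square)
  qed
  then obtain k where k: "\<forall>y\<in>{s..t}. (S y - c) * exp (F y) = k"
    using has_field_derivative_zero_constant[of "{s..t}"] by blast
  have "s \<in> {s..t}" using r by simp
  then have "k = S s - c" using k by (force simp: F_def)
  then have "(S r - c) * exp (F r) = S s - c" using k r by auto
  then have "S r - c = (S s - c) * exp (- F r)"
    by (simp add: exp_minus field_simps)
  then show ?thesis
    unfolding F_def .
qed

lemma riccati_keeps_side_of_root:
  fixes S :: "real \<Rightarrow> real" and c s t r :: real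
  assumes "continuous_on {s..t} S"
    and "\<forall>x\<in>{s..t}. (S has_real_derivative (c\<^sup>2 - (S x)\<^sup>2)) (at x within {s..t})"
    and "r \<in> {s..t}"
  shows "c \<le> S s \<Longrightarrow> c \<le> S r" and "S s \<le> c \<Longrightarrow> S r \<le> c"
  using riccati_shifted_solution[OF assms]
  by (smt (verit) exp_gt_zero mult_nonneg_nonneg mult_nonpos_nonneg)+

lemma riccati_integral_square_ge:
  fixes S :: "real \<Rightarrow> real" and m D s t :: real
  assumes st: "s \<le> t"
    and cont: "continuous_on {s..t} S"
    and der: "\<forall>x\<in>{s..t}. (S has_real_derivative (- m - (S x)\<^sup>2)) (at x within {s..t})"
    and init: "- m \<le> (S s)\<^sup>2"
    and int: "(S has_integral D) {s..t}"
  shows "- m * (t - s)\<^sup>2 \<le> D\<^sup>2"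
proof (cases "m \<ge> 0")
  case True
  then have "- m * (t - s)\<^sup>2 \<le> 0" by simp
  then show ?thesis by (meson order_trans zero_le_power2)
next
  case False
  define c where "c = sqrt (- m)"
  have c2: "c\<^sup>2 = - m" and c0: "0 \<le> c"
    using False by (simp_all add: c_def)
  have derc: "\<forall>x\<in>{s..t}. (S has_real_derivative (c\<^sup>2 - (S x)\<^sup>2)) (at x within {s..t})"
    unfolding c2 by (rule der)
  then have der_neg_c:
    "\<forall>x\<in>{s..t}. (S has_real_derivative ((- c)\<^sup>2 - (S x)\<^sup>2)) (at x within {s..t})"
    unfolding power2_minus .
  have "c\<^sup>2 \<le> (S s)\<^sup>2" using init c2 by simp
  then have "c \<le> \<bar>S s\<bar>" using abs_le_square_iff[of c "S s"] c0 by simp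
  have "c * (t - s) \<le> \<bar>D\<bar>"
  proof (cases "S s \<ge> 0")
    case True
    then have "\<forall>r\<in>{s..t}. c \<le> S r"
      using riccati_keeps_side_of_root(1)[OF cont derc] \<open>c \<le> \<bar>S s\<bar>\<close> by auto
    then have "c * (t - s) \<le> D"
      using has_integral_le[OF has_integral_const_real[of c s t] int] st by (simp add: mult.commute)
    then show ?thesis by simp
  next
    case False
    then have "\<forall>r\<in>{s..t}. S r \<le> - c"
      using riccati_keeps_side_of_root(2)[OF cont der_neg_c] \<open>c \<le> \<bar>S s\<bar>\<close> by auto
    then have "D \<le> - c * (t - s)"
      using has_integral_le[OF int has_integral_const_real[of "- c" s t]] st by (simp add: mult.commute)
    then show ?thesis by simp
  qed
  moreover have "0 \<le> c * (t - s)" using c0 st by simp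
  ultimately have "(c * (t - s))\<^sup>2 \<le> \<bar>D\<bar>\<^sup>2" by (rule power_mono)
  then have "(c * (t - s))\<^sup>2 \<le> D\<^sup>2" by simp
  then show ?thesis using c2 by (simp add: power_mult_distrib)
qed

lemma square_of_sum_ge_of_sum_squares_eq:
  fixes x :: "nat \<Rightarrow> real" and d :: nat and lam :: real
  assumes hd: "d \<ge> 2"
    and eq: "real (d - 1) * lam = (\<Sum>i<d. (x i)\<^sup>2) - (\<Sum>i<d. x i)\<^sup>2"
  shows "- (real d * lam) \<le> (\<Sum>i<d. x i)\<^sup>2"
proof -
  have cs: "(\<Sum>i<d. x i)\<^sup>2 \<le> real d * (\<Sum>i<d. (x i)\<^sup>2)"
    using sum_squared_le_sum_of_squares[of x "{..<d}"] by (simp add: mult.commute)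
  have "real (d - 1) * (real d * lam + (\<Sum>i<d. x i)\<^sup>2)
      = real d * (\<Sum>i<d. (x i)\<^sup>2) - (\<Sum>i<d. x i)\<^sup>2"
    using eq hd by (simp add: of_nat_diff algebra_simps)
  with cs have "0 \<le> real (d - 1) * (real d * lam + (\<Sum>i<d. x i)\<^sup>2)" by simp
  moreover have "0 < real (d - 1)" using hd by simp
  ultimately show ?thesis by (simp add: zero_le_mult_iff)
qed

theorem lemma3p3:
  fixes d :: nat and Dc :: "nat \<Rightarrow> real" and lam :: real
    and L :: "nat \<Rightarrow> real \<Rightarrow> real"
  assumes hd: "d \<ge> 2"
    and hlam: "lam < pi\<^sup>2 / real d"
    and hC1: "\<forall>i<d. continuous_on {0..1} (L i)"
    and hode: "\<forall>i<d. \<forall>r\<in>{0..1}.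
        (L i has_real_derivative (- (\<Sum>k<d. L k r) * L i r - lam)) (at r within {0..1})"
    and hint: "\<forall>i<d. (L i has_integral Dc i) {0..1}"
    and hcond: "real (d - 1) * lam = (\<Sum>i<d. (L i 0)\<^sup>2) - (\<Sum>i<d. L i 0)\<^sup>2"
  shows "lam \<in> {- (\<Sum>i<d. Dc i)\<^sup>2 / real d ..< pi\<^sup>2 / real d}"
proof -
  define S where "S = (\<lambda>r. \<Sum>k<d. L k r)"
  have contS: "continuous_on {0..1} S"
    unfolding S_def using hC1 by (intro continuous_on_sum) auto
  have derS: "\<forall>r\<in>{0..1}. (S has_real_derivative (- (real d * lam) - (S r)\<^sup>2)) (at r within {0..1})"
  proof
    fix r :: real assume "r \<in> {0..1}"
    then have "(S has_real_derivative (\<Sum>i<d. - S r * L i r - lam)) (at r within {0..1})"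
      unfolding S_def using hode by (intro DERIV_sum) auto
    moreover have "(\<Sum>i<d. - S r * L i r - lam) = - (real d * lam) - (S r)\<^sup>2"
      by (simp add: S_def sum_subtractf sum_negf sum_distrib_left[symmetric] power2_eq_square)
    ultimately show "(S has_real_derivative (- (real d * lam) - (S r)\<^sup>2)) (at r within {0..1})"
      by simp
  qed
  have intS: "(S has_integral (\<Sum>i<d. Dc i)) {0..1}"
    unfolding S_def using hint by (intro has_integral_sum) auto
  have initS: "- (real d * lam) \<le> (S 0)\<^sup>2"
    unfolding S_def using square_of_sum_ge_of_sum_squares_eq[OF hd hcond] .
  have "- (real d * lam) \<le> (\<Sum>i<d. Dc i)\<^sup>2"
    using riccati_integral_square_ge[OF _ contS derS initS intS] by simp
  then have "- (\<Sum>i<d. Dc i)\<^sup>2 \<le> lam * real d" by (simp add: mult.commute)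
  moreover have "0 < real d" using hd by simp
  ultimately have "- (\<Sum>i<d. Dc i)\<^sup>2 / real d \<le> lam" by (simp only: pos_divide_le_eq)
  with hlam show ?thesis by simp
qed

end
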